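(* Let $d\ge 2$, $p\in[0,1]$, and let $I$ be the infinite open dual cluster ($I=\emptyset$ if there is none). Then $P_p$-almost surely there is a bijection between the connected components of the hole graph $G(\omega)$ and the connected components of the graph $(\mathbb{L}^d)^*-I$, in which a hole cluster corresponds to the component of $(\mathbb{L}^d)^*-I$ containing the dual vertices lying in its holes; moreover a hole cluster is infinite if and only if the corresponding connected component of $(\mathbb{L}^d)^*-I$ is infinite.
   Context: A face is a $(d-1)$-dimensional elementary cube in $\mathbb{R}^d$ (a product of intervals $[l,l]$ or $[l,l+1]$, $l\in\mathbb{Z}$, with exactly one degenerate factor). Face percolation with parameter $p$: each face open independently with probability $p$ (measure $P_p$); $K(\omega)$ is the union of open faces. Holes are the bounded connected components of $\mathbb{R}^d\setminus K(\omega)$; the hole graph $G(\omega)$ has the holes as vertices (it is the limit $\bigcup_n G^n$ of the corresponding graphs for $K(\omega)\cap[-n,n]^d$), two holes adjacent iff some face lies in both boundaries. Dual lattice $(\mathbb{L}^d)^*$: vertices $(\mathbb{Z}^d)^*=\mathbb{Z}^d+(1/2,\dots,1/2)$, bonds between dual vertices at $\ell^1$-distance $1$. Each dual bond $e^*$ crosses a unique face $Q_{e^*}$, and $e^*$ is open iff $Q_{e^*}$ is closed (this is bond percolation with parameter $1-p$, in which almost surely there is at most one infinite open cluster). $(\mathbb{L}^d)^*-I$ is the subgraph of the full dual lattice (regardless of whether bonds are open) with vertex set $(\mathbb{Z}^d)^*\setminus I$ and all dual bonds having both endpoints outside $I$. A hole cluster is infinite if it has infinitely many holes. *)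

theory Defs
  imports "HOL-Analysis.Analysis" "HOL-Probability.Probability"
begin

text \<open>Lattice Z^d is int^'n (d = CARD('n)). A face is encoded by a pair (a, j):
  the elementary cube with degenerate factor [a_j, a_j] in coordinate j and
  factors [a_i, a_i + 1] in all other coordinates i.\<close>

type_synonym 'n face = "(int ^ 'n) \<times> 'n"

definition face_set :: "'n::finite face \<Rightarrow> (real ^ 'n) set" where
  "face_set f = {x. x $ snd f = of_int (fst f $ snd f) \<and>
      (\<forall>i. i \<noteq> snd f \<longrightarrow> of_int (fst f $ i) \<le> x $ i \<and> x $ i \<le> of_int (fst f $ i) + 1)}"

text \<open>Configuration: omega f = True iff face f is open.\<close>
definition Kset :: "('n::finite face \<Rightarrow> bool) \<Rightarrow> (real ^ 'n) set" where
  "Kset \<omega> = \<Union>{face_set f | f. \<omega> f}"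

definition holes :: "('n::finite face \<Rightarrow> bool) \<Rightarrow> (real ^ 'n) set set" where
  "holes \<omega> = {C \<in> components (- Kset \<omega>). bounded C}"

definition hole_adj :: "('n::finite face \<Rightarrow> bool) \<Rightarrow> (real ^ 'n) set \<Rightarrow> (real ^ 'n) set \<Rightarrow> bool" where
  "hole_adj \<omega> H1 H2 \<longleftrightarrow> H1 \<in> holes \<omega> \<and> H2 \<in> holes \<omega> \<and> H1 \<noteq> H2 \<and>
     (\<exists>f. face_set f \<subseteq> frontier H1 \<and> face_set f \<subseteq> frontier H2)"

definition hole_edges :: "('n::finite face \<Rightarrow> bool) \<Rightarrow> ((real ^ 'n) set \<times> (real ^ 'n) set) set" where
  "hole_edges \<omega> = {(H1, H2). hole_adj \<omega> H1 H2}"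

definition hole_clusters :: "('n::finite face \<Rightarrow> bool) \<Rightarrow> (real ^ 'n) set set set" where
  "hole_clusters \<omega> = {{H'. (H, H') \<in> (hole_edges \<omega>)\<^sup>*} | H. H \<in> holes \<omega>}"

text \<open>Dual lattice: the dual vertex encoded by v :: int^'n is the point v + (1/2,...,1/2).\<close>
definition dual_pt :: "int ^ 'n::finite \<Rightarrow> real ^ 'n" where
  "dual_pt v = (\<chi> i. of_int (v $ i) + 1/2)"

definition dual_adj :: "int ^ 'n::finite \<Rightarrow> int ^ 'n \<Rightarrow> bool" where
  "dual_adj v w \<longleftrightarrow> (\<Sum>i\<in>UNIV. \<bar>v $ i - w $ i\<bar>) = 1"

definition crossed_face :: "int ^ 'n::finite \<Rightarrow> int ^ 'n \<Rightarrow> 'n face" where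
  "crossed_face v w = ((\<chi> i. max (v $ i) (w $ i)), (SOME k. v $ k \<noteq> w $ k))"

definition open_dual_edges :: "('n::finite face \<Rightarrow> bool) \<Rightarrow> ((int ^ 'n) \<times> (int ^ 'n)) set" where
  "open_dual_edges \<omega> = {(v, w). dual_adj v w \<and> \<not> \<omega> (crossed_face v w)}"

text \<open>Union of infinite open dual clusters (a.s. at most one; empty if none).\<close>
definition inf_dual_cluster :: "('n::finite face \<Rightarrow> bool) \<Rightarrow> (int ^ 'n) set" where
  "inf_dual_cluster \<omega> = {v. infinite {w. (v, w) \<in> (open_dual_edges \<omega>)\<^sup>*}}"

definition dual_minus_edges :: "(int ^ 'n::finite) set \<Rightarrow> ((int ^ 'n) \<times> (int ^ 'n)) set" where
  "dual_minus_edges I = {(v, w). v \<notin> I \<and> w \<notin> I \<and> dual_adj v w}"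

definition dual_minus_components :: "(int ^ 'n::finite) set \<Rightarrow> (int ^ 'n) set set" where
  "dual_minus_components I = {{w. (v, w) \<in> (dual_minus_edges I)\<^sup>*} | v. v \<notin> I}"

definition face_perc :: "real \<Rightarrow> ('n::finite face \<Rightarrow> bool) measure" where
  "face_perc p = PiM UNIV (\<lambda>_. measure_pmf (bernoulli_pmf p))"

end

theory Submission
  imports Defs
begin

text \<open>The open unit cells of the lattice avoid K, and each is centred at a dual vertex. A point
  outside K is joined to the centre of every cell containing it by a segment avoiding K, and the
  cells containing such a point are linked by open dual bonds (their common faces are closed).
  Hence the components of the complement of K are exactly the regions around the open dual
  clusters, a region being bounded iff its cluster is finite; the holes are the regions of the
  clusters outside I. Two distinct holes are adjacent iff their clusters contain adjacent dual
  vertices: the face between them is then open and lies on both boundaries. So the hole graph is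
  the quotient of the graph on the dual vertices outside I by its open clusters, whose components
  correspond to those of the graph itself; finiteness transfers because the clusters outside I
  are finite.\<close>

definition cell :: "int ^ 'n::finite \<Rightarrow> (real ^ 'n) set" where
  "cell u = {x. \<forall>i. of_int (u $ i) \<le> x $ i \<and> x $ i \<le> of_int (u $ i) + 1}"

definition open_cell :: "int ^ 'n::finite \<Rightarrow> (real ^ 'n) set" where
  "open_cell u = {x. \<forall>i. of_int (u $ i) < x $ i \<and> x $ i < of_int (u $ i) + 1}"

definition vec_floor :: "real ^ 'n::finite \<Rightarrow> int ^ 'n" where
  "vec_floor x = (\<chi> i. \<lfloor>x $ i\<rfloor>)"

lemma vec_floor_in_cell: "x \<in> cell (vec_floor x)"
  unfolding vec_floor_def cell_def by (simp add: of_int_floor_le real_of_int_floor_add_one_ge)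

lemma vec_floor_dual_pt [simp]: "vec_floor (dual_pt v) = v"
  unfolding vec_floor_def dual_pt_def by (simp add: vec_eq_iff floor_unique)

lemma dual_pt_in_open_cell: "dual_pt u \<in> open_cell u"
  unfolding dual_pt_def open_cell_def by auto

lemma open_cell_eq_box: "open_cell u = box (\<chi> i. of_int (u $ i)) (\<chi> i. of_int (u $ i) + 1)"
  unfolding open_cell_def interval_cart by auto

lemma cell_eq_cbox: "cell u = cbox (\<chi> i. of_int (u $ i)) (\<chi> i. of_int (u $ i) + 1)"
  unfolding cell_def interval_cart by auto

lemma closure_open_cell: "closure (open_cell u) = cell u"
proof -
  have "box (\<chi> i. of_int (u $ i)) (\<chi> i. of_int (u $ i) + (1::real)) \<noteq> {}"
    using dual_pt_in_open_cell[of u] by (auto simp: open_cell_eq_box)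
  then show ?thesis
    unfolding open_cell_eq_box cell_eq_cbox by simp
qed

lemma convex_open_cell: "convex (open_cell u)"
  unfolding open_cell_eq_box by (rule convex_box)

lemma open_cell_disjoint_Kset: "x \<in> open_cell u \<Longrightarrow> x \<notin> Kset \<omega>"
proof
  assume x: "x \<in> open_cell u" and "x \<in> Kset \<omega>"
  then obtain f where "x \<in> face_set f" unfolding Kset_def by auto
  then have "x $ snd f = of_int (fst f $ snd f)" unfolding face_set_def by auto
  moreover have "of_int (u $ snd f) < x $ snd f" "x $ snd f < of_int (u $ snd f) + 1"
    using x unfolding open_cell_def by auto
  ultimately have "u $ snd f < fst f $ snd f" "fst f $ snd f < u $ snd f + 1" by linarith+
  then show False by linarith
qed

lemma dual_pt_notin_Kset: "dual_pt v \<notin> Kset \<omega>"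
  using open_cell_disjoint_Kset dual_pt_in_open_cell by blast

lemma in_cell_vec_floor_nearby:
  assumes "z \<in> box (\<chi> i. of_int \<lceil>a $ i\<rceil> - 1) (\<chi> i. of_int \<lfloor>a $ i\<rfloor> + 1)"
  shows "a \<in> cell (vec_floor z)"
  unfolding cell_def
proof (intro CollectI allI)
  fix i
  have "of_int \<lceil>a $ i\<rceil> - 1 < z $ i" "z $ i < of_int \<lfloor>a $ i\<rfloor> + 1"
    using assms by (auto simp: mem_box_cart)
  then have "\<lfloor>z $ i\<rfloor> \<le> \<lfloor>a $ i\<rfloor>" "\<lceil>a $ i\<rceil> \<le> \<lfloor>z $ i\<rfloor> + 1"
    by linarith+
  then have "of_int \<lfloor>z $ i\<rfloor> \<le> a $ i" "a $ i \<le> of_int \<lfloor>z $ i\<rfloor> + 1"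
    by linarith+
  then show "of_int (vec_floor z $ i) \<le> a $ i \<and> a $ i \<le> of_int (vec_floor z $ i) + 1"
    by (simp add: vec_floor_def)
qed

lemma finite_int_vec_bounded: "finite {w :: int ^ 'n::finite. \<forall>i. \<bar>w $ i\<bar> \<le> N}"
proof -
  have "{w :: int ^ 'n. \<forall>i. \<bar>w $ i\<bar> \<le> N} = vec_nth -` (UNIV \<rightarrow>\<^sub>E {-N..N})"
    by (auto simp: abs_le_iff minus_le_iff)
  moreover have "inj vec_nth" by (simp add: inj_on_def vec_eq_iff)
  ultimately show ?thesis
    by (metis finite_PiE finite_atLeastAtMost_int finite_class.finite_UNIV finite_vimageI)
qed

lemma dual_adjE:
  assumes "dual_adj v w"
  obtains k where "\<bar>v $ k - w $ k\<bar> = 1" "\<And>i. i \<noteq> k \<Longrightarrow> v $ i = w $ i"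
    "crossed_face v w = ((\<chi> i. max (v $ i) (w $ i)), k)"
proof -
  define d where "d i = \<bar>v $ i - w $ i\<bar>" for i
  have sum_d: "sum d UNIV = 1" using assms unfolding dual_adj_def d_def by simp
  then obtain k where "d k \<noteq> 0" by (metis sum.neutral zero_neq_one)
  then have "d k \<ge> 1" by (simp add: d_def)
  moreover have "sum d (UNIV - {k}) \<ge> 0" by (simp add: d_def sum_nonneg)
  moreover have "sum d UNIV = d k + sum d (UNIV - {k})" by (simp add: sum.remove)
  ultimately have dk: "d k = 1" and "sum d (UNIV - {k}) = 0"
    using sum_d by linarith+
  then have others: "v $ i = w $ i" if "i \<noteq> k" for i
    using that sum_nonneg_eq_0_iff[of "UNIV - {k}" d] by (auto simp: d_def)
  have "(SOME k. v $ k \<noteq> w $ k) = k"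
    using dk others by (intro some_equality) (auto simp: d_def)
  then show thesis
    using that[of k] dk others by (simp add: d_def crossed_face_def)
qed

lemma dual_adjI:
  assumes "\<bar>v $ k - w $ k\<bar> = 1" "\<And>i. i \<noteq> k \<Longrightarrow> v $ i = w $ i"
  shows "dual_adj v w"
proof -
  have "(\<Sum>i\<in>UNIV. \<bar>v $ i - w $ i\<bar>) = (\<Sum>i\<in>UNIV. if i = k then 1 else 0)"
    using assms by (intro sum.cong) auto
  then show ?thesis unfolding dual_adj_def by simp
qed

lemma dual_adj_sym: "dual_adj v w \<Longrightarrow> dual_adj w v"
  unfolding dual_adj_def by (simp add: abs_minus_commute)

lemma crossed_face_sym: "crossed_face v w = crossed_face w v"
  unfolding crossed_face_def by (simp add: max.commute eq_commute)

lemma sym_open_dual_edges: "sym (open_dual_edges \<omega>)"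
  unfolding open_dual_edges_def by (auto intro: symI dual_adj_sym simp: crossed_face_sym)

lemma cell_Int_cell:
  assumes "dual_adj u w"
  shows "cell u \<inter> cell w = face_set (crossed_face u w)"
proof -
  obtain k where k: "\<bar>u $ k - w $ k\<bar> = 1" "\<And>i. i \<noteq> k \<Longrightarrow> u $ i = w $ i"
    "crossed_face u w = ((\<chi> i. max (u $ i) (w $ i)), k)"
    using dual_adjE[OF assms] by blast
  have "w $ k = u $ k + 1 \<or> u $ k = w $ k + 1" using k(1) by arith
  then have "(of_int (u $ i) \<le> t \<and> t \<le> of_int (u $ i) + 1 \<and>
      of_int (w $ i) \<le> t \<and> t \<le> of_int (w $ i) + 1) \<longleftrightarrow>
      (if i = k then t = of_int (max (u $ i) (w $ i))
       else of_int (max (u $ i) (w $ i)) \<le> t \<and> t \<le> of_int (max (u $ i) (w $ i)) + 1)"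
    for t :: real and i
    using k(2)[of i] by (cases "i = k") (auto simp: max_def)
  then show ?thesis
    unfolding cell_def face_set_def k(3) by (auto simp: if_split_mem2) metis+
qed

definition face_center :: "'n::finite face \<Rightarrow> real ^ 'n" where
  "face_center f = (\<chi> i. if i = snd f then of_int (fst f $ i) else of_int (fst f $ i) + 1/2)"

lemma face_center_in_face_set_iff: "face_center f \<in> face_set g \<longleftrightarrow> g = f"
proof
  assume center: "face_center f \<in> face_set g"
  obtain a j c k where g: "g = (a, j)" and f: "f = (c, k)" by fastforce
  have "j = k"
  proof (rule ccontr)
    assume "j \<noteq> k"
    then have "of_int (c $ j) + 1/2 = (of_int (a $ j) :: real)"
      using center by (simp add: g f face_set_def face_center_def)
    then have "2 * c $ j + 1 = 2 * a $ j" by linarith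
    then show False by presburger
  qed
  have "a $ i = c $ i" for i
  proof (cases "i = k")
    case True
    then show ?thesis using center \<open>j = k\<close> by (simp add: g f face_set_def face_center_def)
  next
    case False
    then have "of_int (a $ i) \<le> of_int (c $ i) + (1/2::real)"
      "of_int (c $ i) + 1/2 \<le> of_int (a $ i) + (1::real)"
      using center \<open>j = k\<close> by (simp_all add: g f face_set_def face_center_def)
    then show ?thesis by linarith
  qed
  then show "g = f" using g f \<open>j = k\<close> by (simp add: vec_eq_iff)
qed (auto simp: face_set_def face_center_def)

lemma face_center_notin_Kset: "\<not> \<omega> f \<Longrightarrow> face_center f \<notin> Kset \<omega>"
  unfolding Kset_def by (auto simp: face_center_in_face_set_iff)

section \<open>Open dual clusters and the components of the complement of K\<close>

definition dual_cluster :: "('n::finite face \<Rightarrow> bool) \<Rightarrow> int ^ 'n \<Rightarrow> (int ^ 'n) set" where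
  "dual_cluster \<omega> v = {w. (v, w) \<in> (open_dual_edges \<omega>)\<^sup>*}"

lemma dual_cluster_refl [simp]: "v \<in> dual_cluster \<omega> v"
  by (simp add: dual_cluster_def)

lemma dual_cluster_sym: "w \<in> dual_cluster \<omega> v \<Longrightarrow> v \<in> dual_cluster \<omega> w"
  unfolding dual_cluster_def mem_Collect_eq by (meson sym_open_dual_edges sym_rtrancl symD)

lemma dual_cluster_trans: "w \<in> dual_cluster \<omega> v \<Longrightarrow> x \<in> dual_cluster \<omega> w \<Longrightarrow> x \<in> dual_cluster \<omega> v"
  unfolding dual_cluster_def by (meson mem_Collect_eq rtrancl_trans)

lemma dual_cluster_eq: "w \<in> dual_cluster \<omega> v \<Longrightarrow> dual_cluster \<omega> w = dual_cluster \<omega> v"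
  by (meson dual_cluster_sym dual_cluster_trans subsetI subset_antisym)

lemma inf_dual_cluster_iff: "v \<in> inf_dual_cluster \<omega> \<longleftrightarrow> infinite (dual_cluster \<omega> v)"
  unfolding inf_dual_cluster_def dual_cluster_def by simp

lemma inf_dual_cluster_cong:
  "w \<in> dual_cluster \<omega> v \<Longrightarrow> w \<in> inf_dual_cluster \<omega> \<longleftrightarrow> v \<in> inf_dual_cluster \<omega>"
  by (simp add: inf_dual_cluster_iff dual_cluster_eq)

lemma coord_diff_eq_1_if_cells_meet:
  assumes "x \<in> cell u" "x \<in> cell u'" "u $ k \<noteq> u' $ k"
  shows "\<bar>u $ k - u' $ k\<bar> = 1"
proof -
  have "of_int (u $ k) \<le> x $ k" "x $ k \<le> of_int (u $ k) + 1"
    "of_int (u' $ k) \<le> x $ k" "x $ k \<le> of_int (u' $ k) + 1"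
    using assms unfolding cell_def by auto
  then have "u $ k \<le> u' $ k + 1" "u' $ k \<le> u $ k + 1" by linarith+
  then show ?thesis using assms(3) by linarith
qed

text \<open>Change one coordinate at a time: consecutive cells share a face through the point,
  which is therefore closed.\<close>
lemma cells_at_point_in_dual_cluster:
  assumes "x \<notin> Kset \<omega>" "x \<in> cell u" "x \<in> cell u'"
  shows "u' \<in> dual_cluster \<omega> u"
  using assms(2)
proof (induction "card {i. u $ i \<noteq> u' $ i}" arbitrary: u rule: less_induct)
  case less
  show ?case
  proof (cases "u = u'")
    case False
    then obtain k where k: "u $ k \<noteq> u' $ k" by (metis vec_eq_iff)
    define u'' where "u'' = (\<chi> i. if i = k then u' $ k else u $ i)"
    have x_u'': "x \<in> cell u''" using less.prems assms(3) by (auto simp: cell_def u''_def)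
    have adj: "dual_adj u u''"
      by (rule dual_adjI[of u k]) (use coord_diff_eq_1_if_cells_meet[OF less.prems assms(3) k] in \<open>auto simp: u''_def\<close>)
    then have "x \<in> face_set (crossed_face u u'')"
      using cell_Int_cell less.prems x_u'' by blast
    then have "\<not> \<omega> (crossed_face u u'')" using assms(1) unfolding Kset_def by blast
    then have "u'' \<in> dual_cluster \<omega> u"
      using adj by (auto simp: dual_cluster_def open_dual_edges_def)
    moreover have "{i. u'' $ i \<noteq> u' $ i} = {i. u $ i \<noteq> u' $ i} - {k}" by (auto simp: u''_def)
    then have "card {i. u'' $ i \<noteq> u' $ i} < card {i. u $ i \<noteq> u' $ i}"
      using k by (metis (mono_tags) card_Diff1_less finite mem_Collect_eq)
    ultimately show ?thesis
      using less.hyps x_u'' dual_cluster_trans by blast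
  qed simp
qed

lemma connected_component_dual_pt:
  assumes "x \<notin> Kset \<omega>" "x \<in> cell u"
  shows "connected_component (- Kset \<omega>) x (dual_pt u)"
proof -
  have "interior (open_cell u) = open_cell u"
    unfolding open_cell_eq_box by (rule interior_open[OF open_box])
  moreover have "open_segment (dual_pt u) x \<subseteq> interior (open_cell u)"
    by (rule in_interior_closure_convex_segment[OF convex_open_cell])
       (use dual_pt_in_open_cell assms(2) \<open>interior (open_cell u) = open_cell u\<close>
         in \<open>simp_all add: closure_open_cell\<close>)
  ultimately have "open_segment x (dual_pt u) \<subseteq> open_cell u"
    by (simp add: open_segment_commute)
  then have "closed_segment x (dual_pt u) \<subseteq> - Kset \<omega>"
    using assms(1) dual_pt_notin_Kset open_cell_disjoint_Kset
    unfolding closed_segment_eq_open by blast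
  then show ?thesis
    unfolding connected_component_def by (intro exI[of _ "closed_segment x (dual_pt u)"]) auto
qed

lemma connected_component_open_dual_edge:
  assumes "(v, w) \<in> open_dual_edges \<omega>"
  shows "connected_component (- Kset \<omega>) (dual_pt v) (dual_pt w)"
proof -
  let ?y = "face_center (crossed_face v w)"
  have adj: "dual_adj v w" and closed: "\<not> \<omega> (crossed_face v w)"
    using assms unfolding open_dual_edges_def by auto
  have "?y \<in> cell v \<inter> cell w"
    unfolding cell_Int_cell[OF adj] using face_center_in_face_set_iff by blast
  then show ?thesis
    using connected_component_dual_pt face_center_notin_Kset[of \<omega>, OF closed]
    by (meson IntD1 IntD2 connected_component_sym connected_component_trans)
qed

lemma connected_component_dual_cluster:
  assumes "w \<in> dual_cluster \<omega> v"
  shows "connected_component (- Kset \<omega>) (dual_pt v) (dual_pt w)"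
  using assms unfolding dual_cluster_def mem_Collect_eq
proof (induction rule: rtrancl_induct)
  case base
  then show ?case using dual_pt_notin_Kset by (simp add: connected_component_refl)
next
  case (step y z)
  then show ?case using connected_component_open_dual_edge connected_component_trans by metis
qed

text \<open>The cluster of the cell containing a point is locally constant on the complement of K.\<close>
lemma connected_component_vec_floor:
  assumes "connected_component (- Kset \<omega>) x y"
  shows "vec_floor y \<in> dual_cluster \<omega> (vec_floor x)"
proof -
  let ?S = "connected_component_set (- Kset \<omega>) x"
  have xS: "x \<in> ?S" and yS: "y \<in> ?S"
    using assms connected_component_in connected_component_refl_eq by fastforce+
  show ?thesis
  proof (rule connected_equivalence_relation[OF connected_connected_component xS yS])
    fix a b
    assume "vec_floor b \<in> dual_cluster \<omega> (vec_floor a)"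
    then show "vec_floor a \<in> dual_cluster \<omega> (vec_floor b)" by (rule dual_cluster_sym)
  next
    fix a b c
    assume "vec_floor b \<in> dual_cluster \<omega> (vec_floor a)"
      and "vec_floor c \<in> dual_cluster \<omega> (vec_floor b)"
    then show "vec_floor c \<in> dual_cluster \<omega> (vec_floor a)" by (rule dual_cluster_trans)
  next
    fix a assume aS: "a \<in> ?S"
    then have a: "a \<notin> Kset \<omega>" using connected_component_subset by blast
    let ?B = "box (\<chi> i. of_int \<lceil>a $ i\<rceil> - 1) (\<chi> i. of_int \<lfloor>a $ i\<rfloor> + (1::real))"
    have "a \<in> ?B" using ceiling_correct floor_correct by (auto simp: mem_box_cart)
    moreover have "openin (top_of_set ?S) (?S \<inter> ?B)" by (intro openin_open_Int open_box)
    moreover have "vec_floor z \<in> dual_cluster \<omega> (vec_floor a)" if "z \<in> ?B" for z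
      using cells_at_point_in_dual_cluster[OF a vec_floor_in_cell in_cell_vec_floor_nearby[OF that]] .
    ultimately show "\<exists>T. openin (top_of_set ?S) T \<and> a \<in> T \<and>
        (\<forall>z\<in>T. vec_floor z \<in> dual_cluster \<omega> (vec_floor a))"
      using aS by blast
  qed
qed

definition region :: "('n::finite face \<Rightarrow> bool) \<Rightarrow> int ^ 'n \<Rightarrow> (real ^ 'n) set" where
  "region \<omega> v = connected_component_set (- Kset \<omega>) (dual_pt v)"

lemma vec_floor_in_dual_cluster: "x \<in> region \<omega> v \<Longrightarrow> vec_floor x \<in> dual_cluster \<omega> v"
  unfolding region_def using connected_component_vec_floor by fastforce

lemma dual_pt_in_region_iff: "dual_pt w \<in> region \<omega> v \<longleftrightarrow> w \<in> dual_cluster \<omega> v"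
  using vec_floor_in_dual_cluster[of "dual_pt w"] connected_component_dual_cluster
  by (fastforce simp: region_def)

lemma region_eq_iff: "region \<omega> v = region \<omega> w \<longleftrightarrow> w \<in> dual_cluster \<omega> v"
proof
  assume "region \<omega> v = region \<omega> w"
  then show "w \<in> dual_cluster \<omega> v"
    using dual_pt_in_region_iff[of w \<omega> w] dual_pt_in_region_iff[of w \<omega> v] by simp
next
  assume "w \<in> dual_cluster \<omega> v"
  then have "dual_pt w \<in> region \<omega> v" by (simp add: dual_pt_in_region_iff)
  then show "region \<omega> v = region \<omega> w"
    unfolding region_def by (rule connected_component_eq[symmetric])
qed

lemma open_cell_subset_region: "open_cell v \<subseteq> region \<omega> v"
  unfolding region_def
  by (rule connected_component_maximal[OF dual_pt_in_open_cell])
     (auto simp: open_cell_eq_box convex_connected open_cell_disjoint_Kset[unfolded open_cell_eq_box])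

lemma components_eq_range_region: "components (- Kset \<omega>) = range (region \<omega>)"
proof -
  have "connected_component_set (- Kset \<omega>) x = region \<omega> (vec_floor x)" if "x \<notin> Kset \<omega>" for x
    using connected_component_dual_pt[OF that vec_floor_in_cell] connected_component_eq
    unfolding region_def by blast
  then have "components (- Kset \<omega>) = (\<lambda>x. region \<omega> (vec_floor x)) ` (- Kset \<omega>)"
    unfolding components_def by (intro image_cong) auto
  also have "\<dots> = range (region \<omega>)"
    using dual_pt_notin_Kset by (auto intro!: rev_image_eqI[of "dual_pt _"])
  finally show ?thesis .
qed

lemma bounded_region_iff: "bounded (region \<omega> v) \<longleftrightarrow> finite (dual_cluster \<omega> v)"
proof
  assume "bounded (region \<omega> v)"
  then obtain B where B: "\<And>x. x \<in> region \<omega> v \<Longrightarrow> norm x \<le> B" unfolding bounded_iff by blast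
  have "\<bar>w $ i\<bar> \<le> \<lceil>B\<rceil>" if "w \<in> dual_cluster \<omega> v" for w i
  proof -
    have "norm (dual_pt w) \<le> B" using B that by (simp add: dual_pt_in_region_iff)
    then have "\<bar>dual_pt w $ i\<bar> \<le> B" using component_le_norm_cart[of "dual_pt w" i] by linarith
    then show ?thesis by (simp add: dual_pt_def) linarith
  qed
  then have "dual_cluster \<omega> v \<subseteq> {w. \<forall>i. \<bar>w $ i\<bar> \<le> \<lceil>B\<rceil>}" by blast
  then show "finite (dual_cluster \<omega> v)" using finite_int_vec_bounded by (rule finite_subset)
next
  assume "finite (dual_cluster \<omega> v)"
  moreover have "region \<omega> v \<subseteq> (\<Union>w\<in>dual_cluster \<omega> v. cell w)"
    using vec_floor_in_dual_cluster vec_floor_in_cell by blast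
  moreover have "bounded (\<Union>w\<in>dual_cluster \<omega> v. cell w)"
    using \<open>finite (dual_cluster \<omega> v)\<close> by (auto simp: cell_eq_cbox)
  ultimately show "bounded (region \<omega> v)" by (metis bounded_subset)
qed

lemma holes_eq_region_image: "holes \<omega> = region \<omega> ` (- inf_dual_cluster \<omega>)"
  unfolding holes_def components_eq_range_region
  by (auto simp: bounded_region_iff inf_dual_cluster_iff)

section \<open>Adjacent holes and adjacent dual vertices\<close>

lemma face_set_subset_closure_region:
  assumes "dual_adj a b"
  shows "face_set (crossed_face a b) \<subseteq> closure (region \<omega> a)"
proof -
  have "face_set (crossed_face a b) \<subseteq> cell a" using cell_Int_cell[OF assms] by blast
  also have "\<dots> = closure (open_cell a)" by (simp add: closure_open_cell)
  also have "\<dots> \<subseteq> closure (region \<omega> a)" by (intro closure_mono open_cell_subset_region)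
  finally show ?thesis .
qed

lemma open_face_subset_frontier_region:
  assumes "dual_adj a b" "\<omega> (crossed_face a b)"
  shows "face_set (crossed_face a b) \<subseteq> frontier (region \<omega> a)"
proof -
  have "face_set (crossed_face a b) \<subseteq> Kset \<omega>" using assms(2) unfolding Kset_def by blast
  moreover have "interior (region \<omega> a) \<subseteq> - Kset \<omega>"
    using interior_subset connected_component_subset unfolding region_def by blast
  ultimately show ?thesis
    using face_set_subset_closure_region[OF assms(1), of \<omega>] unfolding frontier_def by blast
qed

lemma hole_adj_if_dual_adj:
  assumes "v \<notin> inf_dual_cluster \<omega>" "w \<notin> inf_dual_cluster \<omega>" "region \<omega> v \<noteq> region \<omega> w"
    and "a \<in> dual_cluster \<omega> v" "b \<in> dual_cluster \<omega> w" "dual_adj a b"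
  shows "hole_adj \<omega> (region \<omega> v) (region \<omega> w)"
proof -
  have regions: "region \<omega> a = region \<omega> v" "region \<omega> b = region \<omega> w"
    using dual_cluster_sym[OF assms(4)] dual_cluster_sym[OF assms(5)]
    by (simp_all add: region_eq_iff)
  then have "b \<notin> dual_cluster \<omega> a"
    using assms(3) by (simp flip: region_eq_iff)
  then have "(a, b) \<notin> open_dual_edges \<omega>"
    using r_into_rtrancl[of "(a, b)" "open_dual_edges \<omega>"] by (auto simp: dual_cluster_def)
  then have face_open: "\<omega> (crossed_face a b)"
    using assms(6) unfolding open_dual_edges_def by auto
  have "face_set (crossed_face a b) \<subseteq> frontier (region \<omega> a)"
    using open_face_subset_frontier_region[of a b \<omega>, OF assms(6) face_open] .
  moreover have "face_set (crossed_face a b) \<subseteq> frontier (region \<omega> b)"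
    using open_face_subset_frontier_region[of b a \<omega>, OF dual_adj_sym[OF assms(6)]] face_open
      crossed_face_sym[of a b]
    by simp
  ultimately have "\<exists>f. face_set f \<subseteq> frontier (region \<omega> v) \<and> face_set f \<subseteq> frontier (region \<omega> w)"
    unfolding regions by blast
  then show ?thesis
    unfolding hole_adj_def holes_eq_region_image using assms(1-3) by blast
qed

lemma vec_floor_near_face_center:
  fixes z :: "real ^ 'n::finite"
  assumes near: "\<And>i. \<bar>z $ i - face_center f $ i\<bar> < 1/2"
  shows "\<And>i. i \<noteq> snd f \<Longrightarrow> vec_floor z $ i = fst f $ i"
    and "vec_floor z $ snd f \<in> {fst f $ snd f - 1, fst f $ snd f}"
proof -
  show "vec_floor z $ i = fst f $ i" if "i \<noteq> snd f" for i
  proof -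
    have "\<bar>z $ i - (of_int (fst f $ i) + 1/2)\<bar> < 1/2"
      using near[of i] that by (simp add: face_center_def)
    then have "of_int (fst f $ i) \<le> z $ i" "z $ i < of_int (fst f $ i) + 1" by linarith+
    then show ?thesis by (simp add: vec_floor_def floor_eq_iff)
  qed
  have "\<bar>z $ snd f - of_int (fst f $ snd f)\<bar> < 1/2"
    using near[of "snd f"] by (simp add: face_center_def)
  then have "fst f $ snd f - 1 \<le> \<lfloor>z $ snd f\<rfloor>" "\<lfloor>z $ snd f\<rfloor> \<le> fst f $ snd f"
    by linarith+
  then show "vec_floor z $ snd f \<in> {fst f $ snd f - 1, fst f $ snd f}"
    by (simp add: vec_floor_def) arith
qed

text \<open>The a described are the two cells having f as a side; the witness is the cell of a point of
  the region close to the centre of f.\<close>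
lemma cell_beside_face_in_dual_cluster:
  assumes "face_set f \<subseteq> closure (region \<omega> v)"
  obtains a where "a \<in> dual_cluster \<omega> v" "\<And>i. i \<noteq> snd f \<Longrightarrow> a $ i = fst f $ i"
    "a $ snd f \<in> {fst f $ snd f - 1, fst f $ snd f}"
proof -
  obtain z where z: "z \<in> region \<omega> v" "dist z (face_center f) < 1/2"
    using assms face_center_in_face_set_iff closure_approachable
    by (metis (no_types, lifting) field_sum_of_halves half_gt_zero_iff subsetD zero_less_one)
  have near: "\<bar>z $ i - face_center f $ i\<bar> < 1/2" for i
    using component_le_norm_cart[of "z - face_center f" i] z(2) by (simp add: dist_norm)
  show thesis
    by (rule that[OF vec_floor_in_dual_cluster[OF z(1)] vec_floor_near_face_center[OF near]])
qed

lemma dual_adj_if_hole_adj: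
  assumes "hole_adj \<omega> (region \<omega> v) (region \<omega> w)"
  obtains a b where "a \<in> dual_cluster \<omega> v" "b \<in> dual_cluster \<omega> w" "dual_adj a b"
proof -
  obtain f where f: "face_set f \<subseteq> frontier (region \<omega> v)" "face_set f \<subseteq> frontier (region \<omega> w)"
    and distinct: "region \<omega> v \<noteq> region \<omega> w"
    using assms unfolding hole_adj_def by blast
  have "face_set f \<subseteq> closure (region \<omega> v)" "face_set f \<subseteq> closure (region \<omega> w)"
    using f by (auto simp: frontier_def)
  obtain a where a: "a \<in> dual_cluster \<omega> v" "\<And>i. i \<noteq> snd f \<Longrightarrow> a $ i = fst f $ i"
    "a $ snd f \<in> {fst f $ snd f - 1, fst f $ snd f}"
    using cell_beside_face_in_dual_cluster[OF \<open>face_set f \<subseteq> closure (region \<omega> v)\<close>] by blast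
  obtain b where b: "b \<in> dual_cluster \<omega> w" "\<And>i. i \<noteq> snd f \<Longrightarrow> b $ i = fst f $ i"
    "b $ snd f \<in> {fst f $ snd f - 1, fst f $ snd f}"
    using cell_beside_face_in_dual_cluster[OF \<open>face_set f \<subseteq> closure (region \<omega> w)\<close>] by blast
  have "region \<omega> v = region \<omega> a" "region \<omega> w = region \<omega> b"
    using a(1) b(1) by (simp_all add: region_eq_iff)
  then have "a \<noteq> b" using distinct by auto
  then have "a $ snd f \<noteq> b $ snd f" using a(2) b(2) by (metis vec_eq_iff)
  then have "dual_adj a b"
    using a(2,3) b(2,3) by (intro dual_adjI[of a "snd f"]) auto
  then show thesis using that a(1) b(1) by blast
qed

section \<open>Clusters of a quotient graph\<close>

locale graph_quotient =
  fixes V :: "'a set" and D :: "('a \<times> 'a) set" and q :: "'a \<Rightarrow> 'b" and R :: "('b \<times> 'b) set"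
  assumes D_subset: "D \<subseteq> V \<times> V"
    and R_subset: "R \<subseteq> q ` V \<times> q ` V"
    and fibre_connected: "\<And>v w. v \<in> V \<Longrightarrow> w \<in> V \<Longrightarrow> q v = q w \<Longrightarrow> (v, w) \<in> D\<^sup>*"
    and D_edge: "\<And>a b. (a, b) \<in> D \<Longrightarrow> q a = q b \<or> (q a, q b) \<in> R"
    and R_edge: "\<And>X Y. (X, Y) \<in> R \<Longrightarrow> \<exists>a b. (a, b) \<in> D \<and> q a = X \<and> q b = Y"
begin

lemma rtrancl_D_in_V: "(v, w) \<in> D\<^sup>* \<Longrightarrow> v \<in> V \<Longrightarrow> w \<in> V"
  by (induction rule: rtrancl_induct) (use D_subset in auto)

lemma rtrancl_R_in_image: "(q v, Y) \<in> R\<^sup>* \<Longrightarrow> v \<in> V \<Longrightarrow> Y \<in> q ` V"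
  by (induction rule: rtrancl_induct) (use R_subset in auto)

lemma rtrancl_R_imp_D:
  assumes "(q v, Y) \<in> R\<^sup>*" "v \<in> V"
  obtains w where "w \<in> V" "Y = q w" "(v, w) \<in> D\<^sup>*"
  using assms(1)
proof (induction arbitrary: thesis rule: rtrancl_induct)
  case base
  then show ?case using assms(2) by blast
next
  case (step Y Z)
  obtain w where w: "w \<in> V" "Y = q w" "(v, w) \<in> D\<^sup>*" using step.IH by blast
  obtain a b where ab: "(a, b) \<in> D" "q a = Y" "q b = Z" using R_edge[OF step.hyps(2)] by blast
  then have "a \<in> V" "b \<in> V" using D_subset by auto
  then have "(v, b) \<in> D\<^sup>*"
    using w ab fibre_connected[of w a] by (metis rtrancl_into_rtrancl rtrancl_trans)
  then show ?case using step.prems \<open>b \<in> V\<close> ab(3) by blast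
qed

lemma rtrancl_R_iff:
  assumes "v \<in> V" "w \<in> V"
  shows "(q v, q w) \<in> R\<^sup>* \<longleftrightarrow> (v, w) \<in> D\<^sup>*"
proof
  assume "(q v, q w) \<in> R\<^sup>*"
  then obtain w' where "w' \<in> V" "q w = q w'" "(v, w') \<in> D\<^sup>*"
    using rtrancl_R_imp_D assms(1) by metis
  then show "(v, w) \<in> D\<^sup>*" using fibre_connected assms(2) by (metis rtrancl_trans)
next
  assume "(v, w) \<in> D\<^sup>*"
  then show "(q v, q w) \<in> R\<^sup>*"
    by (induction rule: rtrancl_induct) (auto dest: D_edge intro: rtrancl_into_rtrancl)
qed

definition R_clusters :: "'b set set" where
  "R_clusters = {{Y. (q v, Y) \<in> R\<^sup>*} | v. v \<in> V}"

definition D_clusters :: "'a set set" where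
  "D_clusters = {{w. (v, w) \<in> D\<^sup>*} | v. v \<in> V}"

definition lift :: "'b set \<Rightarrow> 'a set" where
  "lift C = {v \<in> V. q v \<in> C}"

lemma lift_R_cluster: "v \<in> V \<Longrightarrow> lift {Y. (q v, Y) \<in> R\<^sup>*} = {w. (v, w) \<in> D\<^sup>*}"
  unfolding lift_def using rtrancl_R_iff rtrancl_D_in_V by blast

lemma image_lift: "C \<in> R_clusters \<Longrightarrow> q ` lift C = C"
  unfolding R_clusters_def lift_def using rtrancl_R_in_image by blast

lemma bij_betw_lift: "bij_betw lift R_clusters D_clusters"
proof (rule bij_betw_imageI)
  show "inj_on lift R_clusters"
    by (rule inj_on_inverseI[where g = "image q"]) (rule image_lift)
  show "lift ` R_clusters = D_clusters"
    unfolding R_clusters_def D_clusters_def using lift_R_cluster by auto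
qed

lemma finite_lift_iff:
  assumes "C \<in> R_clusters" and "\<And>X. finite {w \<in> V. q w = X}"
  shows "finite (lift C) \<longleftrightarrow> finite C"
proof
  assume "finite (lift C)"
  then show "finite C" using image_lift[OF assms(1)] finite_imageI by metis
next
  assume "finite C"
  moreover have "lift C = (\<Union>X\<in>C. {w \<in> V. q w = X})" unfolding lift_def by blast
  ultimately show "finite (lift C)" using assms(2) by simp
qed

end

section \<open>Holes as a quotient of the dual lattice minus I\<close>

lemma rtrancl_dual_minus_edges_if_dual_cluster:
  assumes "w \<in> dual_cluster \<omega> v" "v \<notin> inf_dual_cluster \<omega>"
  shows "(v, w) \<in> (dual_minus_edges (inf_dual_cluster \<omega>))\<^sup>*"
  using assms unfolding dual_cluster_def mem_Collect_eq
proof (induction rule: rtrancl_induct)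
  case (step x y)
  then have "x \<in> dual_cluster \<omega> v" "y \<in> dual_cluster \<omega> v"
    by (auto simp: dual_cluster_def intro: rtrancl_into_rtrancl)
  then have "x \<notin> inf_dual_cluster \<omega>" "y \<notin> inf_dual_cluster \<omega>"
    using step.prems inf_dual_cluster_cong by blast+
  moreover have "dual_adj x y" using step.hyps(2) by (simp add: open_dual_edges_def)
  ultimately have "(x, y) \<in> dual_minus_edges (inf_dual_cluster \<omega>)"
    by (simp add: dual_minus_edges_def)
  then show ?case using step.IH step.prems by simp
qed simp

lemma finite_region_fibre: "finite {w \<in> - inf_dual_cluster \<omega>. region \<omega> w = X}"
proof (cases "\<exists>u. u \<notin> inf_dual_cluster \<omega> \<and> region \<omega> u = X")
  case True
  then obtain u where u: "u \<notin> inf_dual_cluster \<omega>" "region \<omega> u = X" by blast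
  then have "{w \<in> - inf_dual_cluster \<omega>. region \<omega> w = X} \<subseteq> dual_cluster \<omega> u"
    using region_eq_iff by blast
  moreover have "finite (dual_cluster \<omega> u)" using u(1) by (simp add: inf_dual_cluster_iff)
  ultimately show ?thesis by (rule finite_subset)
next
  case False
  then have "{w \<in> - inf_dual_cluster \<omega>. region \<omega> w = X} = {}" by blast
  then show ?thesis by (simp only: finite.emptyI)
qed

lemma graph_quotient_region:
  "graph_quotient (- inf_dual_cluster \<omega>) (dual_minus_edges (inf_dual_cluster \<omega>))
    (region \<omega>) (hole_edges \<omega>)"
proof
  show "dual_minus_edges (inf_dual_cluster \<omega>) \<subseteq> (- inf_dual_cluster \<omega>) \<times> (- inf_dual_cluster \<omega>)"
    by (auto simp: dual_minus_edges_def)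
  show "hole_edges \<omega> \<subseteq>
      region \<omega> ` (- inf_dual_cluster \<omega>) \<times> region \<omega> ` (- inf_dual_cluster \<omega>)"
    by (auto simp: hole_edges_def hole_adj_def holes_eq_region_image)
next
  fix v w assume "v \<in> - inf_dual_cluster \<omega>" "region \<omega> v = region \<omega> w"
  then show "(v, w) \<in> (dual_minus_edges (inf_dual_cluster \<omega>))\<^sup>*"
    by (simp add: region_eq_iff rtrancl_dual_minus_edges_if_dual_cluster)
next
  fix a b assume "(a, b) \<in> dual_minus_edges (inf_dual_cluster \<omega>)"
  then have "a \<notin> inf_dual_cluster \<omega>" "b \<notin> inf_dual_cluster \<omega>" "dual_adj a b"
    by (simp_all add: dual_minus_edges_def)
  then have "region \<omega> a \<noteq> region \<omega> b \<Longrightarrow> hole_adj \<omega> (region \<omega> a) (region \<omega> b)"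
    using hole_adj_if_dual_adj[of a \<omega> b a b] by simp
  then show "region \<omega> a = region \<omega> b \<or> (region \<omega> a, region \<omega> b) \<in> hole_edges \<omega>"
    by (auto simp: hole_edges_def)
next
  fix X Y assume "(X, Y) \<in> hole_edges \<omega>"
  then obtain v w where vw: "v \<notin> inf_dual_cluster \<omega>" "w \<notin> inf_dual_cluster \<omega>"
    "X = region \<omega> v" "Y = region \<omega> w" "hole_adj \<omega> X Y"
    by (auto simp: hole_edges_def hole_adj_def holes_eq_region_image)
  then obtain a b where ab: "a \<in> dual_cluster \<omega> v" "b \<in> dual_cluster \<omega> w" "dual_adj a b"
    using dual_adj_if_hole_adj by metis
  then have "(a, b) \<in> dual_minus_edges (inf_dual_cluster \<omega>)"
    using vw(1,2) inf_dual_cluster_cong[OF ab(1)] inf_dual_cluster_cong[OF ab(2)]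
    by (simp add: dual_minus_edges_def)
  moreover have "region \<omega> a = X" "region \<omega> b = Y"
    using dual_cluster_sym[OF ab(1)] dual_cluster_sym[OF ab(2)] vw(3,4)
    by (simp_all add: region_eq_iff)
  ultimately show "\<exists>a b. (a, b) \<in> dual_minus_edges (inf_dual_cluster \<omega>) \<and>
      region \<omega> a = X \<and> region \<omega> b = Y"
    by blast
qed

text \<open>The statement holds for every configuration.\<close>
theorem lemma3p3:
  fixes p :: real
  assumes "CARD('n::finite) \<ge> 2" and "0 \<le> p" and "p \<le> 1"
  shows "AE \<omega> in (face_perc p :: ('n face \<Rightarrow> bool) measure).
    \<exists>\<Phi>. bij_betw \<Phi> (hole_clusters \<omega>) (dual_minus_components (inf_dual_cluster \<omega>)) \<and>
        (\<forall>C\<in>hole_clusters \<omega>. \<forall>H\<in>C. \<forall>v. dual_pt v \<in> H \<longrightarrow> v \<in> \<Phi> C) \<and>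
        (\<forall>C\<in>hole_clusters \<omega>. infinite C \<longleftrightarrow> infinite (\<Phi> C))"
proof (rule AE_I2)
  fix \<omega> :: "'n face \<Rightarrow> bool"
  interpret graph_quotient "- inf_dual_cluster \<omega>" "dual_minus_edges (inf_dual_cluster \<omega>)"
    "region \<omega>" "hole_edges \<omega>"
    by (rule graph_quotient_region)
  have clusters: "hole_clusters \<omega> = R_clusters"
    unfolding hole_clusters_def R_clusters_def holes_eq_region_image by blast
  have components: "dual_minus_components (inf_dual_cluster \<omega>) = D_clusters"
    unfolding dual_minus_components_def D_clusters_def by simp
  have "v \<in> lift C" if C: "C \<in> R_clusters" and H: "H \<in> C" and v: "dual_pt v \<in> H"
    for C H v
  proof -
    obtain w where w: "w \<in> lift C" "H = region \<omega> w" using image_lift[OF C] H by blast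
    then have vw: "v \<in> dual_cluster \<omega> w" using v by (simp add: dual_pt_in_region_iff)
    then show ?thesis
      using w H inf_dual_cluster_cong[OF vw] region_eq_iff[of \<omega> w v] by (simp add: lift_def)
  qed
  then show "\<exists>\<Phi>. bij_betw \<Phi> (hole_clusters \<omega>) (dual_minus_components (inf_dual_cluster \<omega>)) \<and>
        (\<forall>C\<in>hole_clusters \<omega>. \<forall>H\<in>C. \<forall>v. dual_pt v \<in> H \<longrightarrow> v \<in> \<Phi> C) \<and>
        (\<forall>C\<in>hole_clusters \<omega>. infinite C \<longleftrightarrow> infinite (\<Phi> C))"
    unfolding clusters components
    using bij_betw_lift finite_lift_iff[OF _ finite_region_fibre] by blast
qed

end
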